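(* Let $f$ be a complex-valued harmonic function in a bounded open set $R\subset\mathbb{C}$. Suppose that $P=\operatorname{int}(\overline{R})\setminus R$ is empty or consists of finitely many poles of $f$, and suppose that $f$ extends continuously to $\partial R\setminus P$. Then $f(S)\cup f(\partial R\setminus P)$ partitions $\mathbb{C}$ into regions of constant valence: on each connected component of $\mathbb{C}\setminus(f(S)\cup f(\partial R\setminus P))$, the number of distinct $z\in R$ with $f(z)=w$ is constant.
   Context: Writing $f=u+iv$, $J_f=u_xv_y-u_yv_x$ and $S=\{z\in R: J_f(z)=0\}$. A point $\alpha$ is a pole of $f$ if $f$ is harmonic in $\{z:0<|z-\alpha|<r\}$ for some $r>0$ and $\lim_{z\to\alpha}|f(z)|=\infty$. $f(\partial R\setminus P)$ denotes the image under the continuous extension. *)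

theory Defs
  imports "HOL-Analysis.Analysis"
begin

definition dx :: "(complex \<Rightarrow> complex) \<Rightarrow> complex \<Rightarrow> complex" where
  "dx f z = vector_derivative (\<lambda>t::real. f (z + of_real t)) (at 0)"

definition dy :: "(complex \<Rightarrow> complex) \<Rightarrow> complex \<Rightarrow> complex" where
  "dy f z = vector_derivative (\<lambda>t::real. f (z + \<i> * of_real t)) (at 0)"

definition C2_on :: "complex set \<Rightarrow> (complex \<Rightarrow> complex) \<Rightarrow> bool" where
  "C2_on A f \<longleftrightarrow>
     (\<forall>z\<in>A. f differentiable (at z)) \<and>
     (\<forall>z\<in>A. dx f differentiable (at z) \<and> dy f differentiable (at z)) \<and>
     continuous_on A (dx (dx f)) \<and> continuous_on A (dx (dy f)) \<and>
     continuous_on A (dy (dx f)) \<and> continuous_on A (dy (dy f))"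

definition harmonic_on :: "complex set \<Rightarrow> (complex \<Rightarrow> complex) \<Rightarrow> bool" where
  "harmonic_on A f \<longleftrightarrow> open A \<and> C2_on A f \<and>
     (\<forall>z\<in>A. dx (dx f) z + dy (dy f) z = 0)"

definition jacobian :: "(complex \<Rightarrow> complex) \<Rightarrow> complex \<Rightarrow> real" where
  "jacobian f z = Re (dx f z) * Im (dy f z) - Re (dy f z) * Im (dx f z)"

definition is_harmonic_pole :: "(complex \<Rightarrow> complex) \<Rightarrow> complex \<Rightarrow> bool" where
  "is_harmonic_pole f \<alpha> \<longleftrightarrow>
     (\<exists>r>0. harmonic_on (ball \<alpha> r - {\<alpha>}) f) \<and> filterlim (\<lambda>z. norm (f z)) at_top (at \<alpha>)"

end

theory Submission
  imports Defs
begin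

text \<open>
  Fix \<open>w\<close> outside \<open>f(S) \<union> f(\<partial>R - P)\<close>. Then \<open>w\<close> is a cluster value of \<open>f\<close> on \<open>R\<close>
  only at points of \<open>R\<close> where \<open>f = w\<close>: near a pole \<open>|f| \<rightarrow> \<infinity>\<close>, and at a point of
  \<open>\<partial>R - P\<close> the continuous extension differs from \<open>w\<close>. Hence the fibre of \<open>w\<close> in \<open>R\<close> is
  compact, and since \<open>J\<^sub>f \<noteq> 0\<close> on it, \<open>f\<close> is injective near each of its points (inverse
  function theorem), so the fibre is finite. Take disjoint balls around its points on which
  \<open>f\<close> is injective: by invariance of domain their images are open neighbourhoods of \<open>w\<close>,
  and by compactness \<open>|f - w|\<close> is bounded below on \<open>R\<close> outside the balls. So every value
  close to \<open>w\<close> has exactly one preimage in each ball and none elsewhere: the valence is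
  locally constant off \<open>f(S) \<union> f(\<partial>R - P)\<close>, hence constant on each component.
\<close>

lemma vector_derivative_along_line:
  assumes "(f has_derivative f') (at z)"
  shows "vector_derivative (\<lambda>t::real. f (z + t *\<^sub>R v)) (at 0) = f' v"
proof -
  have "((\<lambda>t::real. z + t *\<^sub>R v) has_derivative (\<lambda>t. t *\<^sub>R v)) (at 0)"
    by (auto intro!: derivative_eq_intros)
  from has_derivative_compose[OF this] assms
  have "((\<lambda>t. f (z + t *\<^sub>R v)) has_derivative (\<lambda>t. f' (t *\<^sub>R v))) (at 0)"
    by (simp add: o_def)
  moreover have "f' (t *\<^sub>R v) = t *\<^sub>R f' v" for t
    using assms by (simp add: has_derivative_linear linear_scale)
  ultimately show ?thesis
    by (simp add: has_vector_derivative_def vector_derivative_at)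
qed

lemma dx_eq_derivative_one:
  assumes "(f has_derivative f') (at z)"
  shows "dx f z = f' 1"
  using vector_derivative_along_line[OF assms, of 1]
  by (simp add: dx_def scaleR_conv_of_real)

lemma dy_eq_derivative_imaginary_unit:
  assumes "(f has_derivative f') (at z)"
  shows "dy f z = f' \<i>"
  using vector_derivative_along_line[OF assms, of \<i>]
  by (simp add: dy_def scaleR_conv_of_real mult.commute)

lemma has_derivative_eq_partials:
  assumes "(f has_derivative f') (at z)"
  shows "f' = (\<lambda>h. Re h *\<^sub>R dx f z + Im h *\<^sub>R dy f z)"
proof
  fix h
  have "f' h = f' (Re h *\<^sub>R 1 + Im h *\<^sub>R \<i>)"
    by (rule arg_cong[where f = f']) (simp add: complex_eq_iff)
  also have "\<dots> = Re h *\<^sub>R f' 1 + Im h *\<^sub>R f' \<i>"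
    using assms by (simp add: has_derivative_linear linear_add linear_scale)
  finally show "f' h = Re h *\<^sub>R dx f z + Im h *\<^sub>R dy f z"
    by (simp add: dx_eq_derivative_one[OF assms] dy_eq_derivative_imaginary_unit[OF assms])
qed

lemma inj_Re_Im_combination:
  assumes "Re a * Im b - Re b * Im a \<noteq> 0"
  shows "inj (\<lambda>h. Re h *\<^sub>R a + Im h *\<^sub>R b)"
proof -
  let ?d = "Re a * Im b - Re b * Im a"
  have lin: "linear (\<lambda>h. Re h *\<^sub>R a + Im h *\<^sub>R b)"
    by (intro linearI) (simp_all add: algebra_simps)
  have "h = 0" if "Re h *\<^sub>R a + Im h *\<^sub>R b = 0" for h
  proof -
    have Re_eq: "Re h * Re a + Im h * Re b = 0" and Im_eq: "Re h * Im a + Im h * Im b = 0"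
      using arg_cong[OF that, of Re] arg_cong[OF that, of Im] by simp_all
    have "Re h * ?d = Im b * (Re h * Re a + Im h * Re b) - Re b * (Re h * Im a + Im h * Im b)"
      by (simp add: algebra_simps)
    then have "Re h * ?d = 0"
      by (simp only: Re_eq Im_eq mult_zero_right diff_self)
    have "Im h * ?d = Re a * (Re h * Im a + Im h * Im b) - Im a * (Re h * Re a + Im h * Re b)"
      by (simp add: algebra_simps)
    then have "Im h * ?d = 0"
      by (simp only: Re_eq Im_eq mult_zero_right diff_self)
    with \<open>Re h * ?d = 0\<close> assms show "h = 0"
      by (simp add: complex_eq_iff)
  qed
  then show ?thesis
    unfolding linear_inj_iff_eq_0[OF lin] by blast
qed

lemma onorm_Re_Im_combination_le:
  "onorm (\<lambda>h. Re h *\<^sub>R a + Im h *\<^sub>R b) \<le> norm a + norm b"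
proof (rule onorm_le)
  fix h :: complex
  have "norm (Re h *\<^sub>R a + Im h *\<^sub>R b) \<le> \<bar>Re h\<bar> * norm a + \<bar>Im h\<bar> * norm b"
    by (rule order_trans[OF norm_triangle_ineq]) simp
  also have "\<dots> \<le> norm h * norm a + norm h * norm b"
    by (intro add_mono mult_right_mono abs_Re_le_cmod abs_Im_le_cmod) auto
  finally show "norm (Re h *\<^sub>R a + Im h *\<^sub>R b) \<le> (norm a + norm b) * norm h"
    by (simp add: algebra_simps)
qed

lemma onorm_diff_partials_small:
  assumes "isCont (dx f) z" "isCont (dy f) z" "e > 0"
  shows "\<exists>d>0. \<forall>x. dist z x < d \<longrightarrow>
           onorm (\<lambda>h. (Re h *\<^sub>R dx f x + Im h *\<^sub>R dy f x) - (Re h *\<^sub>R dx f z + Im h *\<^sub>R dy f z)) < e"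
proof -
  let ?D = "\<lambda>x h. Re h *\<^sub>R dx f x + Im h *\<^sub>R dy f x"
  define \<Delta> where "\<Delta> x = norm (dx f x - dx f z) + norm (dy f x - dy f z)" for x
  have "isCont \<Delta> z"
    unfolding \<Delta>_def using assms(1,2) by (intro continuous_intros)
  then obtain d where "d > 0" and d: "\<And>x. dist x z < d \<Longrightarrow> \<Delta> x < e"
    using \<open>e > 0\<close> by (force simp: continuous_at_eps_delta \<Delta>_def)
  have bound: "onorm (\<lambda>h. ?D x h - ?D z h) \<le> \<Delta> x" for x
  proof -
    have "(\<lambda>h. ?D x h - ?D z h) = (\<lambda>h. Re h *\<^sub>R (dx f x - dx f z) + Im h *\<^sub>R (dy f x - dy f z))"
      by (rule ext) (simp add: scaleR_diff_right)
    then show ?thesis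
      using onorm_Re_Im_combination_le unfolding \<Delta>_def by metis
  qed
  show ?thesis
  proof (intro exI conjI allI impI)
    fix x assume "dist z x < d"
    then have "\<Delta> x < e"
      using d by (simp add: dist_commute)
    with bound[of x] show "onorm (\<lambda>h. ?D x h - ?D z h) < e"
      by linarith
  qed fact
qed

lemma locally_injective_if_jacobian_nonzero:
  assumes "open A" "z \<in> A" and diff: "\<And>x. x \<in> A \<Longrightarrow> f differentiable (at x)"
    and cont: "isCont (dx f) z" "isCont (dy f) z" and J: "jacobian f z \<noteq> 0"
  shows "\<exists>r>0. inj_on f (ball z r)"
proof -
  let ?D = "\<lambda>x h. Re h *\<^sub>R dx f x + Im h *\<^sub>R dy f x"
  have derf: "(f has_derivative ?D x) (at x)" if x: "x \<in> A" for x
  proof -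
    obtain f' where f': "(f has_derivative f') (at x)"
      using diff[OF x] by (auto simp: differentiable_def)
    with has_derivative_eq_partials[OF f'] show ?thesis
      by simp
  qed
  have "inj (?D z)"
    using J unfolding jacobian_def by (rule inj_Re_Im_combination)
  moreover have "linear (?D z)"
    using derf[OF \<open>z \<in> A\<close>] by (rule has_derivative_linear)
  ultimately obtain g where g: "linear g" "g \<circ> ?D z = id"
    using linear_injective_left_inverse by blast
  then have "bounded_linear g"
    by (simp add: linear_conv_bounded_linear)
  obtain r where "r > 0" "ball z r \<subseteq> A" "inj_on f (ball z r)"
    by (rule has_derivative_locally_injective[OF \<open>z \<in> A\<close> \<open>open A\<close> \<open>bounded_linear g\<close> g(2) derf
          onorm_diff_partials_small[OF cont]])
  then show ?thesis by blast
qed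

lemma harmonic_on_imp_continuous_on: "harmonic_on A f \<Longrightarrow> continuous_on A f"
  by (simp add: harmonic_on_def C2_on_def continuous_at_imp_continuous_on
      differentiable_imp_continuous_within)

lemma harmonic_on_locally_injective:
  assumes "harmonic_on A f" "z \<in> A" "jacobian f z \<noteq> 0"
  shows "\<exists>r>0. inj_on f (ball z r)"
  using assms
  by (intro locally_injective_if_jacobian_nonzero[of A])
     (auto simp: harmonic_on_def C2_on_def differentiable_imp_continuous_within)

text \<open>Neighbourhoods of \<open>z\<close> contain \<open>z\<close> itself, so every point of \<open>A\<close> where \<open>f\<close> takes the
  value \<open>w\<close> is a cluster value.\<close>
definition cluster_value :: "('a::topological_space \<Rightarrow> 'b::metric_space) \<Rightarrow> 'a set \<Rightarrow> 'a \<Rightarrow> 'b \<Rightarrow> bool"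
  where "cluster_value f A z w \<longleftrightarrow> (\<forall>e>0. \<exists>\<^sub>F y in nhds z. y \<in> A \<and> dist (f y) w < e)"

lemma not_cluster_value_iff:
  "\<not> cluster_value f A z w \<longleftrightarrow> (\<exists>e>0. \<forall>\<^sub>F y in nhds z. y \<in> A \<longrightarrow> e \<le> dist (f y) w)"
  by (simp add: cluster_value_def not_frequently not_less)

lemma cluster_value_imp_in_closure:
  assumes "cluster_value f A z w"
  shows "z \<in> closure A"
proof (rule ccontr)
  assume "z \<notin> closure A"
  then have "\<forall>\<^sub>F y in nhds z. y \<in> A \<longrightarrow> 1 \<le> dist (f y) w"
    by (auto simp: eventually_nhds intro!: exI[of _ "- closure A"] dest: closure_subset[THEN subsetD])
  then show False
    using assms not_cluster_value_iff zero_less_one by blast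
qed

lemma not_cluster_value_at_infinity_limit:
  fixes f :: "'a::topological_space \<Rightarrow> 'b::real_normed_vector"
  assumes "filterlim (\<lambda>y. norm (f y)) at_top (at z)" "z \<notin> A"
  shows "\<not> cluster_value f A z w"
proof -
  have "\<forall>\<^sub>F y in at z. norm w + 1 \<le> norm (f y)"
    using assms(1) by (simp add: filterlim_at_top)
  moreover have "1 \<le> dist (f y) w" if "norm w + 1 \<le> norm (f y)" for y
    using that norm_triangle_ineq2[of "f y" w] by (simp add: dist_norm)
  ultimately have "\<forall>\<^sub>F y in nhds z. y \<in> A \<longrightarrow> 1 \<le> dist (f y) w"
    using assms(2) unfolding eventually_at_filter by (auto elim!: eventually_mono)
  then show ?thesis
    using not_cluster_value_iff zero_less_one by blast
qed

lemma not_cluster_value_if_continuous: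
  assumes "continuous (at z within B) f" "A \<subseteq> B" "f z \<noteq> w"
  shows "\<not> cluster_value f A z w"
proof -
  define e where "e = dist (f z) w / 2"
  have "e > 0" using assms(3) by (simp add: e_def)
  with assms(1) have "\<forall>\<^sub>F y in at z within B. dist (f y) (f z) < e"
    by (simp add: continuous_within tendsto_iff)
  moreover have "e \<le> dist (f y) w" if "y = z \<or> dist (f y) (f z) < e" for y
    using that dist_triangle[of "f z" w "f y"] by (auto simp: e_def dist_commute)
  ultimately have "\<forall>\<^sub>F y in nhds z. y \<in> A \<longrightarrow> e \<le> dist (f y) w"
    using assms(2) unfolding eventually_at_filter by (auto elim!: eventually_mono)
  then show ?thesis
    using not_cluster_value_iff \<open>e > 0\<close> by blast
qed

lemma cluster_values_subset_fiber:
  fixes f :: "'a::t2_space \<Rightarrow> 'b::real_normed_vector"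
  assumes poles: "\<forall>\<alpha>\<in>P. filterlim (\<lambda>z. norm (f z)) at_top (at \<alpha>)"
    and cont: "continuous_on (A \<union> (frontier A - P)) f"
    and w: "w \<notin> f ` (frontier A - P)"
  shows "{z. cluster_value f A z w} \<subseteq> {z\<in>A. f z = w}"
proof clarify
  fix z assume cl: "cluster_value f A z w"
  have "z \<notin> P \<or> z \<in> A"
    using poles cl not_cluster_value_at_infinity_limit by blast
  then have z: "z \<in> A \<union> (frontier A - P)"
    using cluster_value_imp_in_closure[OF cl] closure_Un_frontier by blast
  then have "f z = w"
    using cont cl not_cluster_value_if_continuous[of z "A \<union> (frontier A - P)" f A w]
    by (auto simp: continuous_on_eq_continuous_within)
  with z w show "z \<in> A \<and> f z = w" by blast
qed

lemma compact_uniform_lower_bound: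
  fixes g :: "'a::topological_space \<Rightarrow> real"
  assumes "compact K" and local: "\<And>z. z \<in> K \<Longrightarrow> \<exists>e>0. \<forall>\<^sub>F y in nhds z. y \<in> A \<longrightarrow> e \<le> g y"
  shows "\<exists>e>0. \<forall>y\<in>K \<inter> A. e \<le> g y"
proof -
  have "\<forall>z\<in>K. \<exists>e N. e > 0 \<and> open N \<and> z \<in> N \<and> (\<forall>y\<in>N. y \<in> A \<longrightarrow> e \<le> g y)"
    using local unfolding eventually_nhds by blast
  then obtain e N where e: "\<And>z. z \<in> K \<Longrightarrow> e z > 0"
    and N: "\<And>z. z \<in> K \<Longrightarrow> open (N z) \<and> z \<in> N z \<and> (\<forall>y\<in>N z. y \<in> A \<longrightarrow> e z \<le> g y)"
    by metis
  have "\<And>z. z \<in> K \<Longrightarrow> open (N z)" "K \<subseteq> (\<Union>z\<in>K. N z)"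
    using N by blast+
  then obtain C where C: "C \<subseteq> K" "finite C" "K \<subseteq> (\<Union>c\<in>C. N c)"
    using compactE_image[OF \<open>compact K\<close>] by blast
  define e0 where "e0 = Min (insert 1 (e ` C))"
  have "e0 > 0"
    unfolding e0_def using C(1,2) e by (subst Min_gr_iff) auto
  moreover have "e0 \<le> g y" if y: "y \<in> K \<inter> A" for y
  proof -
    obtain c where "c \<in> C" "y \<in> N c"
      using C(3) y by blast
    have "e0 \<le> e c"
      unfolding e0_def using C(2) \<open>c \<in> C\<close> by (intro Min_le) auto
    also have "e c \<le> g y"
      using N[of c] C(1) \<open>c \<in> C\<close> \<open>y \<in> N c\<close> y by blast
    finally show ?thesis .
  qed
  ultimately show ?thesis by blast
qed

lemma dist_bounded_below_outside_neighbourhood_of_fiber: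
  fixes f :: "'a::heine_borel \<Rightarrow> 'b::metric_space"
  assumes "bounded A" and cl: "{z. cluster_value f A z w} \<subseteq> {z\<in>A. f z = w}"
    and "open U" and fiber: "{z\<in>A. f z = w} \<subseteq> U"
  shows "\<exists>e>0. \<forall>y\<in>A - U. e \<le> dist (f y) w"
proof -
  have K: "compact (closure A - U)"
    using \<open>bounded A\<close> \<open>open U\<close> by (simp add: compact_diff)
  have local: "\<exists>e>0. \<forall>\<^sub>F y in nhds z. y \<in> A \<longrightarrow> e \<le> dist (f y) w"
    if "z \<in> closure A - U" for z
    unfolding not_cluster_value_iff[symmetric] using that cl fiber by blast
  obtain e where "e > 0" and e: "\<forall>y\<in>(closure A - U) \<inter> A. e \<le> dist (f y) w"
    using compact_uniform_lower_bound[OF K local] by blast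
  moreover have "A - U \<subseteq> (closure A - U) \<inter> A"
    using closure_subset by blast
  ultimately show ?thesis
    by blast
qed

lemma closed_fiber_if_cluster_values_subset:
  assumes "{z. cluster_value f A z w} \<subseteq> {z\<in>A. f z = w}"
  shows "closed {z\<in>A. f z = w}"
proof -
  have "cluster_value f A z w" if "z islimpt {z\<in>A. f z = w}" for z
  proof (rule ccontr)
    assume "\<not> cluster_value f A z w"
    then obtain e where "e > 0" "\<forall>\<^sub>F y in nhds z. y \<in> A \<longrightarrow> e \<le> dist (f y) w"
      by (auto simp: not_cluster_value_iff)
    then have "\<forall>\<^sub>F y in at z. y \<notin> {z\<in>A. f z = w}"
      unfolding eventually_at_filter by (auto elim!: eventually_mono)
    with that show False
      by (simp add: islimpt_iff_eventually)
  qed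
  then show ?thesis
    using assms closed_limpt by blast
qed

lemma finite_fiber_if_locally_injective:
  fixes f :: "'a::heine_borel \<Rightarrow> 'b::metric_space"
  assumes "bounded A" and cl: "{z. cluster_value f A z w} \<subseteq> {z\<in>A. f z = w}"
    and inj: "\<And>z. z \<in> A \<Longrightarrow> f z = w \<Longrightarrow> \<exists>r>0. inj_on f (ball z r)"
  shows "finite {z\<in>A. f z = w}"
proof -
  let ?F = "{z\<in>A. f z = w}"
  have "compact ?F"
    using closed_fiber_if_cluster_values_subset[OF cl] bounded_subset[OF \<open>bounded A\<close>]
    by (simp add: compact_eq_bounded_closed)
  moreover have "\<not> z islimpt ?F" if z: "z \<in> ?F" for z
  proof -
    obtain r where "r > 0" "inj_on f (ball z r)"
      using inj z by blast
    moreover have "y = z" if "y \<in> ?F" "dist y z < r" for y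
    proof (rule inj_onD[OF \<open>inj_on f (ball z r)\<close>])
      show "f y = f z" using that \<open>z \<in> ?F\<close> by simp
      show "y \<in> ball z r" "z \<in> ball z r" using that \<open>r > 0\<close> by (simp_all add: dist_commute)
    qed
    ultimately show ?thesis
      unfolding islimpt_approachable by blast
  qed
  ultimately have "finite (?F \<inter> ?F)"
    by (rule finite_not_islimpt_in_compact)
  then show ?thesis by simp
qed

lemma card_fiber_eq_card_of_disjoint_injective_pieces:
  assumes "finite I" "disjoint_family_on B I"
    and pieces: "\<And>i. i \<in> I \<Longrightarrow> B i \<subseteq> A \<and> inj_on f (B i) \<and> w \<in> f ` B i"
    and cover: "{y\<in>A. f y = w} \<subseteq> (\<Union>i\<in>I. B i)"
  shows "finite {y\<in>A. f y = w} \<and> card {y\<in>A. f y = w} = card I"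
proof -
  have singleton: "\<exists>x. {y\<in>B i. f y = w} = {x}" if i: "i \<in> I" for i
  proof -
    obtain x where "x \<in> B i" "f x = w"
      using pieces[OF i] by blast
    moreover have "y = x" if "y \<in> B i" "f y = w" for y
      using pieces[OF i] inj_onD that \<open>x \<in> B i\<close> \<open>f x = w\<close> by metis
    ultimately have "{y\<in>B i. f y = w} = {x}"
      by blast
    then show ?thesis by blast
  qed
  then have finite_piece: "finite {y\<in>B i. f y = w}" and card_piece: "card {y\<in>B i. f y = w} = 1"
    if "i \<in> I" for i
    using singleton[OF that] by auto
  have fiber: "{y\<in>A. f y = w} = (\<Union>i\<in>I. {y\<in>B i. f y = w})"
    using pieces cover by blast
  have "card (\<Union>i\<in>I. {y\<in>B i. f y = w}) = (\<Sum>i\<in>I. card {y\<in>B i. f y = w})"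
    using \<open>finite I\<close> \<open>disjoint_family_on B I\<close> finite_piece
    by (intro card_UN_disjoint) (auto simp: disjoint_family_on_def)
  also have "\<dots> = card I"
    using card_piece by (simp cong: sum.cong)
  moreover have "finite (\<Union>i\<in>I. {y\<in>B i. f y = w})"
    using \<open>finite I\<close> finite_piece by (rule finite_UN_I)
  ultimately show ?thesis
    by (simp add: fiber)
qed

lemma finite_set_common_radius:
  fixes F :: "'a::metric_space set"
  assumes "finite F" and small: "\<And>z. z \<in> F \<Longrightarrow> \<forall>\<^sub>F \<rho> in at_right 0. P z \<rho>"
  obtains \<rho> where "\<rho> > 0" "\<And>z. z \<in> F \<Longrightarrow> P z \<rho>" "disjoint_family_on (\<lambda>z. ball z \<rho>) F"
proof -
  have apart: "\<forall>\<^sub>F \<rho> in at_right 0. \<forall>z'\<in>F - {z}. \<rho> < dist z z' / 2" for z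
  proof (rule eventually_ball_finite)
    show "finite (F - {z})"
      using \<open>finite F\<close> by simp
    show "\<forall>z'\<in>F - {z}. \<forall>\<^sub>F \<rho> in at_right 0. \<rho> < dist z z' / 2"
    proof
      fix z' assume "z' \<in> F - {z}"
      then have "0 < dist z z' / 2" by auto
      then show "\<forall>\<^sub>F \<rho> in at_right 0. \<rho> < dist z z' / 2"
        by (rule order_tendstoD(2)[OF tendsto_ident_at])
    qed
  qed
  have "\<forall>\<^sub>F \<rho> in at_right 0. \<forall>z\<in>F. P z \<rho> \<and> (\<forall>z'\<in>F - {z}. \<rho> < dist z z' / 2)"
  proof (rule eventually_ball_finite[OF \<open>finite F\<close>], intro ballI)
    fix z assume "z \<in> F"
    show "\<forall>\<^sub>F \<rho> in at_right 0. P z \<rho> \<and> (\<forall>z'\<in>F - {z}. \<rho> < dist z z' / 2)"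
      using small[OF \<open>z \<in> F\<close>] apart by (rule eventually_conj)
  qed
  from eventually_happens'[OF trivial_limit_at_right_real eventually_conj[OF eventually_at_right_less this]]
  obtain \<rho> where "\<rho> > 0" and \<rho>: "\<forall>z\<in>F. P z \<rho> \<and> (\<forall>z'\<in>F - {z}. \<rho> < dist z z' / 2)"
    by blast
  have "disjoint_family_on (\<lambda>z. ball z \<rho>) F"
    unfolding disjoint_family_on_def
  proof (intro ballI impI, rule ccontr)
    fix z z' assume "z \<in> F" "z' \<in> F" "z \<noteq> z'" "ball z \<rho> \<inter> ball z' \<rho> \<noteq> {}"
    then obtain y where "dist z y < \<rho>" "dist z' y < \<rho>" by auto
    moreover have "dist z z' \<le> dist z y + dist z' y"
      using dist_triangle[of z z' y] by (simp add: dist_commute)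
    moreover have "\<rho> < dist z z' / 2"
      using \<rho> \<open>z \<in> F\<close> \<open>z' \<in> F\<close> \<open>z \<noteq> z'\<close> by blast
    ultimately show False by linarith
  qed
  with \<open>\<rho> > 0\<close> \<rho> that show ?thesis
    by blast
qed

lemma eventually_small_ball_subset_inj_on:
  assumes "open A" "z \<in> A" "\<exists>r>0. inj_on f (ball z r)"
  shows "\<forall>\<^sub>F \<rho> in at_right 0. ball z \<rho> \<subseteq> A \<and> inj_on f (ball z \<rho>)"
proof -
  obtain r1 where "r1 > 0" "ball z r1 \<subseteq> A"
    using assms(1,2) by (rule openE)
  obtain r2 where "r2 > 0" "inj_on f (ball z r2)"
    using assms(3) by blast
  from order_tendstoD(2)[OF tendsto_ident_at \<open>r1 > 0\<close>] order_tendstoD(2)[OF tendsto_ident_at \<open>r2 > 0\<close>]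
  show ?thesis
  proof eventually_elim
    case (elim \<rho>)
    then have "ball z \<rho> \<subseteq> ball z r1" "ball z \<rho> \<subseteq> ball z r2"
      by (simp_all add: subset_ball)
    then show ?case
      using \<open>ball z r1 \<subseteq> A\<close> inj_on_subset[OF \<open>inj_on f (ball z r2)\<close>] by blast
  qed
qed

lemma eventually_card_fiber_eq:
  fixes f :: "'a::euclidean_space \<Rightarrow> 'a"
  assumes "open A" "bounded A" "continuous_on A f"
    and cl: "{z. cluster_value f A z w0} \<subseteq> {z\<in>A. f z = w0}"
    and inj: "\<And>z. z \<in> A \<Longrightarrow> f z = w0 \<Longrightarrow> \<exists>r>0. inj_on f (ball z r)"
  shows "\<forall>\<^sub>F w in nhds w0. finite {z\<in>A. f z = w} \<and> card {z\<in>A. f z = w} = card {z\<in>A. f z = w0}"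
proof -
  define F where "F = {z\<in>A. f z = w0}"
  have "finite F"
    unfolding F_def using finite_fiber_if_locally_injective[OF \<open>bounded A\<close> cl inj] .
  have small: "\<forall>\<^sub>F \<rho> in at_right 0. ball z \<rho> \<subseteq> A \<and> inj_on f (ball z \<rho>)" if "z \<in> F" for z
    using that inj by (intro eventually_small_ball_subset_inj_on[OF \<open>open A\<close>]) (auto simp: F_def)
  obtain \<rho> where "\<rho> > 0" and \<rho>F: "\<And>z. z \<in> F \<Longrightarrow> ball z \<rho> \<subseteq> A \<and> inj_on f (ball z \<rho>)"
    and disjoint: "disjoint_family_on (\<lambda>z. ball z \<rho>) F"
    using finite_set_common_radius[where P = "\<lambda>z \<rho>. ball z \<rho> \<subseteq> A \<and> inj_on f (ball z \<rho>)",
        OF \<open>finite F\<close> small]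
    by blast
  define U where "U = (\<Union>z\<in>F. ball z \<rho>)"
  have "open U"
    by (simp add: U_def open_UN)
  moreover have "{z\<in>A. f z = w0} \<subseteq> U"
    using \<open>\<rho> > 0\<close> by (auto simp: U_def F_def)
  ultimately obtain \<delta> where "\<delta> > 0" and \<delta>: "\<forall>y\<in>A - U. \<delta> \<le> dist (f y) w0"
    using dist_bounded_below_outside_neighbourhood_of_fiber[OF \<open>bounded A\<close> cl] by blast
  define W where "W = ball w0 \<delta> \<inter> (\<Inter>z\<in>F. f ` ball z \<rho>)"
  have open_image: "open (f ` ball z \<rho>)" if "z \<in> F" for z
    using \<rho>F[OF that] \<open>continuous_on A f\<close>
    by (intro invariance_of_domain) (auto intro: continuous_on_subset)
  have "open W"
    unfolding W_def using \<open>finite F\<close> open_image by (intro open_Int open_INT) auto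
  have "w0 \<in> f ` ball z \<rho>" if "z \<in> F" for z
    using that \<open>\<rho> > 0\<close> by (auto simp: F_def intro!: image_eqI[of w0 f z])
  then have "w0 \<in> W"
    using \<open>\<delta> > 0\<close> by (simp add: W_def)
  have counts: "finite {z\<in>A. f z = w} \<and> card {z\<in>A. f z = w} = card F" if "w \<in> W" for w
  proof (rule card_fiber_eq_card_of_disjoint_injective_pieces[OF \<open>finite F\<close> disjoint])
    show "ball z \<rho> \<subseteq> A \<and> inj_on f (ball z \<rho>) \<and> w \<in> f ` ball z \<rho>" if "z \<in> F" for z
      using \<rho>F[OF that] \<open>w \<in> W\<close> that by (auto simp: W_def)
    have "y \<in> U" if "y \<in> A" "f y = w" for y
    proof (rule ccontr)
      assume "y \<notin> U"
      then have "\<delta> \<le> dist w w0"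
        using \<delta> that by auto
      moreover have "dist w w0 < \<delta>"
        using \<open>w \<in> W\<close> by (simp add: W_def dist_commute)
      ultimately show False by linarith
    qed
    then show "{y\<in>A. f y = w} \<subseteq> (\<Union>z\<in>F. ball z \<rho>)"
      by (auto simp: U_def)
  qed
  show ?thesis
    unfolding eventually_nhds F_def[symmetric] using \<open>open W\<close> \<open>w0 \<in> W\<close> counts by blast
qed

lemma locally_constant_eq_on_component:
  assumes C: "C \<in> components S" and loc: "\<And>a. a \<in> S \<Longrightarrow> \<forall>\<^sub>F v in nhds a. g v = g a"
    and "w \<in> C" "w' \<in> C"
  shows "g w = g w'"
proof -
  have "g constant_on C"
  proof (rule locally_constant_imp_constant)
    show "connected C"
      using C by (rule in_components_connected)
  next
    fix a assume "a \<in> C"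
    then have "a \<in> S"
      using in_components_subset[OF C] by blast
    then obtain W where "open W" "a \<in> W" "\<forall>v\<in>W. g v = g a"
      using loc unfolding eventually_nhds by meson
    then show "\<exists>T. openin (top_of_set C) T \<and> a \<in> T \<and> (\<forall>x\<in>T. g x = g a)"
      using \<open>a \<in> C\<close> openin_open_Int[OF \<open>open W\<close>, of C] by blast
  qed
  then show ?thesis
    using \<open>w \<in> C\<close> \<open>w' \<in> C\<close> unfolding constant_on_def by metis
qed

theorem corollary4p13:
  fixes f :: "complex \<Rightarrow> complex" and R :: "complex set"
  assumes "open R" and "bounded R"
    and "harmonic_on R f"
    and "finite (interior (closure R) - R)"
    and "\<forall>\<alpha> \<in> interior (closure R) - R. is_harmonic_pole f \<alpha>"
    and "continuous_on (R \<union> (frontier R - (interior (closure R) - R))) f"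
  shows "\<forall>C \<in> components (- (f ` {z\<in>R. jacobian f z = 0}
                                \<union> f ` (frontier R - (interior (closure R) - R)))).
           \<forall>w\<in>C. \<forall>w'\<in>C.
             (finite {z\<in>R. f z = w} \<longleftrightarrow> finite {z\<in>R. f z = w'}) \<and>
             card {z\<in>R. f z = w} = card {z\<in>R. f z = w'}"
proof (intro ballI)
  let ?B = "frontier R - (interior (closure R) - R)"
  let ?O = "- (f ` {z\<in>R. jacobian f z = 0} \<union> f ` ?B)"
  fix C w w'
  assume C: "C \<in> components ?O" and "w \<in> C" "w' \<in> C"
  have valence: "\<forall>\<^sub>F v in nhds a. finite {z\<in>R. f z = v} \<and> card {z\<in>R. f z = v} = card {z\<in>R. f z = a}"
    if a: "a \<in> ?O" for a
  proof (rule eventually_card_fiber_eq[OF \<open>open R\<close> \<open>bounded R\<close>])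
    show "continuous_on R f"
      using \<open>harmonic_on R f\<close> by (rule harmonic_on_imp_continuous_on)
    show "{z. cluster_value f R z a} \<subseteq> {z\<in>R. f z = a}"
      using assms(5,6) a unfolding is_harmonic_pole_def
      by (intro cluster_values_subset_fiber) auto
    show "\<exists>r>0. inj_on f (ball z r)" if "z \<in> R" "f z = a" for z
      using harmonic_on_locally_injective[OF \<open>harmonic_on R f\<close> \<open>z \<in> R\<close>] that a by blast
  qed
  have "finite {z\<in>R. f z = v}" if "v \<in> C" for v
    using eventually_nhds_x_imp_x[OF valence] that in_components_subset[OF C] by blast
  moreover have "card {z\<in>R. f z = w} = card {z\<in>R. f z = w'}"
  proof (rule locally_constant_eq_on_component[OF C _ \<open>w \<in> C\<close> \<open>w' \<in> C\<close>])
    show "\<forall>\<^sub>F v in nhds a. card {z\<in>R. f z = v} = card {z\<in>R. f z = a}" if "a \<in> ?O" for a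
      using valence[OF that] by (rule eventually_mono) blast
  qed
  ultimately show "(finite {z\<in>R. f z = w} \<longleftrightarrow> finite {z\<in>R. f z = w'}) \<and>
                   card {z\<in>R. f z = w} = card {z\<in>R. f z = w'}"
    using \<open>w \<in> C\<close> \<open>w' \<in> C\<close> by blast
qed

end
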